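(* With the notation of the context, the functions $d$ and $g$ are $C^1$ on $(-1,1)$, and $d>0$, $g>0$. Moreover $$\lim_{\rho\to1^-}d(\rho)=\lambda e^{-rT}s_0e^{(\nu-\eta\frac{\mu-r}{\sigma}-\frac{\eta^2}{2})T},\qquad \lim_{\rho\to-1^+}d(\rho)=\lambda e^{-rT}s_0e^{(\nu+\eta\frac{\mu-r}{\sigma}-\frac{\eta^2}{2})T},$$ $$\lim_{\rho\to1^-}g(\rho)=\lambda e^{-rT}s_0e^{(\nu-\eta\frac{\mu-r}{\sigma})T},\qquad \lim_{\rho\to-1^+}g(\rho)=\lambda e^{-rT}s_0e^{(\nu+\eta\frac{\mu-r}{\sigma})T}.$$ For all $\rho\in(-1,1)$, $$\left(b(\rho)-\frac{\lambda e^{-rT}}{\theta(\rho)}\frac{w(\rho)^2}{2\eta^4T^2}e_2\right)_+\le a(\rho)\le b(\rho),$$ where $e_2=e^{2\eta^2T}-2(1+\eta^2T)e^{\frac{\eta^2T}{2}}+\eta^2T+1$. Moreover, $a$, $b$, $d$ and $g$ are bounded on $(-1,1)$.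
   Context: Fix $T>0$, $r,\nu,\mu\in\mathbb R$, $\eta>0$, $\sigma>0$, $s_0>0$, $\lambda>0$, $\gamma>0$; $N$ is a standard Gaussian random variable; $W$ is the Lambert function (inverse of $x\in(-1,\infty)\mapsto xe^x$). For $\rho\in(-1,1)$ define $\theta(\rho)=\lambda\gamma(1-\rho^2)$, $$w(\rho)=W\left(s_0\eta^2Te^{(\nu-\eta\rho\frac{\mu-r}{\sigma}-\frac{\eta^2}{2})T}\theta(\rho)\right),\qquad d(\rho)=\frac{\lambda e^{-rT}}{\theta(\rho)\eta^2T}\,w(\rho)\left(1+\frac{w(\rho)}{2}\right),$$ $$a(\rho)=-\frac{\lambda e^{-rT}}{\theta(\rho)}\ln\mathbb E\left(\exp\left(-\frac{w(\rho)}{\eta^2T}\left(e^{\eta\sqrt TN}-1-\eta\sqrt TN\right)\right)\right),\qquad b(\rho)=\frac{\lambda e^{-rT}}{\theta(\rho)}\frac{w(\rho)}{\eta^2T}\left(e^{\frac{\eta^2}{2}T}-1\right),$$ $$g(\rho)=d(\rho)+b(\rho)=\frac{\lambda e^{-rT}}{\theta(\rho)}\frac{w(\rho)}{\eta^2T}\left(e^{\frac{\eta^2}{2}T}+\frac{w(\rho)}{2}\right).$$ $x_+=\max(x,0)$. *)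

theory Defs
  imports "HOL-Probability.Probability"
begin

definition lambertW :: "real \<Rightarrow> real" where
  "lambertW y = (THE x. x > -1 \<and> x * exp x = y)"

definition gauss_expect :: "(real \<Rightarrow> real) \<Rightarrow> real" where
  "gauss_expect f = (LINT x|lborel. std_normal_density x * f x)"

end

theory Submission
  imports Defs
begin

text \<open>
  Write \<open>w = W (A \<theta>)\<close> with \<open>A \<rho> = s0 \<eta>\<^sup>2 T exp ((\<nu> - \<eta> \<rho> (\<mu> - r) / \<sigma> - \<eta>\<^sup>2 / 2) T)\<close>.
  The identity \<open>W y / y = exp (- W y)\<close> turns the singular quotient \<open>w / \<theta>\<close> into
  \<open>A exp (- w)\<close>, which is positive and \<open>C\<^sup>1\<close> on \<open>(-1, 1)\<close> and tends to \<open>A (\<plusminus>1)\<close> at the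
  endpoints, where \<open>\<theta> \<rightarrow> 0\<close> forces \<open>w \<rightarrow> 0\<close>. Since \<open>d\<close>, \<open>b\<close> and \<open>g\<close> are this quotient times
  affine functions of \<open>w\<close>, smoothness, positivity and the limits follow, and boundedness
  follows from continuity together with finite limits at both endpoints.

  For \<open>a\<close>, put \<open>Z = exp (s N) - 1 - s N \<ge> 0\<close> with \<open>s = \<eta> \<surd>T\<close> and \<open>k = w / (\<eta>\<^sup>2 T)\<close>.
  Jensen's inequality gives \<open>ln E exp (- k Z) \<ge> - k E Z = - k (exp (s\<^sup>2 / 2) - 1)\<close>, which is
  \<open>a \<le> b\<close>; the bound \<open>exp (- u) \<le> 1 - u + u\<^sup>2 / 2\<close> together with \<open>ln x \<le> x - 1\<close> and the
  second moment \<open>E Z\<^sup>2 = e\<^sub>2\<close> gives the lower bound.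
\<close>

lemma mult_exp_strict_mono:
  fixes x y :: real
  assumes "-1 < x" "x < y"
  shows "x * exp x < y * exp y"
proof (rule DERIV_pos_imp_increasing[OF assms(2)])
  fix t :: real assume "x \<le> t"
  have "DERIV (\<lambda>x. x * exp x) t :> (1 + t) * exp t"
    by (auto intro!: derivative_eq_intros simp: algebra_simps)
  moreover have "0 < (1 + t) * exp t" using assms \<open>x \<le> t\<close> by simp
  ultimately show "\<exists>D. DERIV (\<lambda>x. x * exp x) t :> D \<and> 0 < D" by blast
qed

lemma lambertW_eqI:
  fixes x y :: real
  assumes "-1 < x" "x * exp x = y"
  shows "lambertW y = x"
  unfolding lambertW_def
proof (rule the_equality)
  fix z assume "z > -1 \<and> z * exp z = y"
  then show "z = x"
    using assms mult_exp_strict_mono[of x z] mult_exp_strict_mono[of z x]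
    by (cases x z rule: linorder_cases) auto
qed (use assms in auto)

lemma lambertW_on_nonneg:
  fixes y :: real
  assumes "0 \<le> y"
  shows "0 \<le> lambertW y" "lambertW y \<le> y" "lambertW y * exp (lambertW y) = y"
proof -
  have "y \<le> y * exp y" using assms by (simp add: mult_le_cancel_left1)
  then obtain x where x: "0 \<le> x" "x \<le> y" "x * exp x = y"
    using IVT[of "\<lambda>x. x * exp x" 0 y y] assms by (auto intro: continuous_intros)
  then have "lambertW y = x" by (intro lambertW_eqI) auto
  with x show "0 \<le> lambertW y" "lambertW y \<le> y" "lambertW y * exp (lambertW y) = y" by auto
qed

lemma lambertW_pos:
  fixes y :: real
  assumes "0 < y"
  shows "0 < lambertW y"
  using lambertW_on_nonneg[of y] assms by (metis less_eq_real_def mult_zero_left)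

lemma lambertW_div_self:
  fixes y :: real
  assumes "0 < y"
  shows "lambertW y / y = exp (- lambertW y)"
  using lambertW_on_nonneg(3)[of y] assms by (auto simp: field_simps exp_minus)

lemma has_real_derivative_lambertW:
  fixes y :: real
  assumes "0 < y"
  shows "(lambertW has_real_derivative inverse ((1 + lambertW y) * exp (lambertW y))) (at y)"
proof (rule DERIV_inverse_function[where f = "\<lambda>x. x * exp x" and a = 0 and b = "y + 1"])
  define x where "x = lambertW y"
  have "0 < x" using lambertW_pos[OF assms] by (simp add: x_def)
  then show "(1 + lambertW y) * exp (lambertW y) \<noteq> 0" by (simp add: x_def)
  show "((\<lambda>x. x * exp x) has_real_derivative (1 + lambertW y) * exp (lambertW y)) (at (lambertW y))"
    by (auto intro!: derivative_eq_intros simp: algebra_simps)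
  show "lambertW z * exp (lambertW z) = z" if "0 < z" for z
    using that lambertW_on_nonneg(3) by simp
  have "isCont lambertW (x * exp x)"
  proof (rule isCont_inverse_function[where f = "\<lambda>x. x * exp x" and d = "x / 2"])
    show "0 < x / 2" using \<open>0 < x\<close> by simp
  next
    fix z :: real assume "\<bar>z - x\<bar> \<le> x / 2"
    with \<open>0 < x\<close> have "-1 < z" by linarith
    then show "lambertW (z * exp z) = z" by (intro lambertW_eqI) auto
  qed (auto intro: continuous_intros)
  then show "isCont lambertW y"
    using lambertW_on_nonneg(3)[of y] assms by (simp add: x_def)
qed (use assms in auto)

lemma continuous_on_lambertW: "continuous_on {0<..} lambertW"
  by (intro continuous_at_imp_continuous_on ballI DERIV_isCont[OF has_real_derivative_lambertW]) simp

lemma tendsto_lambertW_zero: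
  assumes "(f \<longlongrightarrow> 0) F" "eventually (\<lambda>x. 0 \<le> f x) F"
  shows "((\<lambda>x. lambertW (f x)) \<longlongrightarrow> 0) F"
  by (rule tendsto_sandwich[where f = "\<lambda>_. 0" and h = f])
     (use assms in \<open>auto elim!: eventually_mono intro: lambertW_on_nonneg\<close>)

lemma C1_differentiable_on_of_real_deriv:
  fixes f :: "real \<Rightarrow> real"
  assumes "\<And>x. x \<in> S \<Longrightarrow> (f has_real_derivative f' x) (at x)" "continuous_on S f'"
  shows "f C1_differentiable_on S"
  unfolding C1_differentiable_on_def
  using assms has_real_derivative_iff_has_vector_derivative by blast

lemma C1_differentiable_on_compose_real:
  fixes f g :: "real \<Rightarrow> real"
  assumes f: "f C1_differentiable_on S" and g: "g C1_differentiable_on T" and "f ` S \<subseteq> T"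
  shows "(\<lambda>x. g (f x)) C1_differentiable_on S"
proof -
  obtain Df where Df: "\<And>x. x \<in> S \<Longrightarrow> (f has_real_derivative Df x) (at x)" "continuous_on S Df"
    using f by (auto simp: C1_differentiable_on_def has_real_derivative_iff_has_vector_derivative)
  obtain Dg where Dg: "\<And>y. y \<in> T \<Longrightarrow> (g has_real_derivative Dg y) (at y)" "continuous_on T Dg"
    using g by (auto simp: C1_differentiable_on_def has_real_derivative_iff_has_vector_derivative)
  have "continuous_on S f"
    using Df(1) by (intro continuous_at_imp_continuous_on) (auto intro: DERIV_isCont)
  with Dg(2) \<open>f ` S \<subseteq> T\<close> have "continuous_on S (\<lambda>x. Dg (f x))"
    by (intro continuous_on_compose2[of T Dg S f])
  then show ?thesis
  proof (intro C1_differentiable_on_of_real_deriv[where f' = "\<lambda>x. Dg (f x) * Df x"] continuous_intros)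
    fix x assume "x \<in> S"
    with \<open>f ` S \<subseteq> T\<close> have "f x \<in> T" by auto
    then show "((\<lambda>x. g (f x)) has_real_derivative Dg (f x) * Df x) (at x)"
      by (rule DERIV_chain2[OF Dg(1) Df(1)[OF \<open>x \<in> S\<close>]])
  qed (use Df(2) in auto)
qed

lemma C1_differentiable_on_divide_real:
  fixes f g :: "real \<Rightarrow> real"
  assumes "f C1_differentiable_on S" "g C1_differentiable_on S" "\<And>x. x \<in> S \<Longrightarrow> g x \<noteq> 0"
  shows "(\<lambda>x. f x / g x) C1_differentiable_on S"
proof -
  have "inverse C1_differentiable_on (- {0} :: real set)"
  proof (rule C1_differentiable_on_of_real_deriv)
    show "(inverse has_real_derivative - (inverse x * inverse x)) (at x)" if "x \<in> - {0}" for x :: real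
      using DERIV_inverse[of x UNIV] that by (simp add: power2_eq_square)
    show "continuous_on (- {0}) (\<lambda>x::real. - (inverse x * inverse x))"
      by (intro continuous_intros) auto
  qed
  then have "(\<lambda>x. inverse (g x)) C1_differentiable_on S"
    using assms by (intro C1_differentiable_on_compose_real[of g S inverse "- {0}"]) auto
  then show ?thesis
    using assms(1) by (simp add: divide_inverse)
qed

lemma C1_differentiable_on_lambertW: "lambertW C1_differentiable_on {0<..}"
proof (rule C1_differentiable_on_of_real_deriv)
  have "(1 + lambertW y) * exp (lambertW y) \<noteq> 0" if "0 < y" for y
    using lambertW_pos[OF that] by (simp add: add_pos_pos)
  then show "continuous_on {0<..} (\<lambda>y. inverse ((1 + lambertW y) * exp (lambertW y)))"
    by (intro continuous_intros continuous_on_lambertW) auto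
qed (rule has_real_derivative_lambertW, simp)

lemma exp_tangent_le:
  fixes c v :: real
  shows "exp c * (1 + v - c) \<le> exp v"
proof -
  have "exp c * (1 + (v - c)) \<le> exp c * exp (v - c)"
    using exp_ge_add_one_self[of "v - c"] by (intro mult_left_mono) auto
  then show ?thesis by (simp add: exp_diff add_diff_eq)
qed

lemma exp_minus_le_quadratic:
  fixes u :: real
  assumes "0 \<le> u"
  shows "exp (- u) \<le> 1 - u + u\<^sup>2 / 2"
proof -
  let ?f = "\<lambda>u::real. 1 - u + u\<^sup>2 / 2 - exp (- u)"
  have "?f 0 \<le> ?f u"
  proof (rule DERIV_nonneg_imp_increasing_open[OF assms])
    fix x :: real
    have "(?f has_real_derivative x - 1 + exp (- x)) (at x)"
      by (auto intro!: derivative_eq_intros simp: algebra_simps)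
    moreover have "0 \<le> x - 1 + exp (- x)"
      using exp_ge_add_one_self[of "- x"] by simp
    ultimately show "\<exists>y. (?f has_real_derivative y) (at x) \<and> 0 \<le> y" by blast
  qed (intro continuous_intros, auto)
  then show ?thesis by simp
qed

lemma has_bochner_integral_eqI:
  "has_bochner_integral M f x \<Longrightarrow> (\<And>y. f y = g y) \<Longrightarrow> x = z \<Longrightarrow> has_bochner_integral M g z"
  using has_bochner_integral_cong[of M M f g x z] by simp

context
  fixes M :: "'a measure" and \<phi> Z :: "'a \<Rightarrow> real" and k :: real
  assumes density: "has_bochner_integral M \<phi> 1" "\<And>x. 0 \<le> \<phi> x"
    and Z: "Z \<in> borel_measurable M" "\<And>x. 0 \<le> Z x"
    and k: "0 \<le> k"
begin

lemma density_exp_neg_le: "\<phi> x * exp (- k * Z x) \<le> \<phi> x"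
  using density(2)[of x] Z(2)[of x] k by (simp add: mult_left_le)

lemma integrable_density_exp_neg: "integrable M (\<lambda>x. \<phi> x * exp (- k * Z x))"
proof (rule Bochner_Integration.integrable_bound)
  show "integrable M \<phi>" using density(1) by (rule integrable.intros)
  then show "(\<lambda>x. \<phi> x * exp (- k * Z x)) \<in> borel_measurable M"
    using Z(1) by measurable
  show "AE x in M. norm (\<phi> x * exp (- k * Z x)) \<le> norm (\<phi> x)"
    using density(2) density_exp_neg_le by (intro AE_I2) simp
qed

lemma integral_density_exp_neg_le_one: "(LINT x|M. \<phi> x * exp (- k * Z x)) \<le> 1"
proof -
  have "integrable M \<phi>" using density(1) by (rule integrable.intros)
  then have "(LINT x|M. \<phi> x * exp (- k * Z x)) \<le> (LINT x|M. \<phi> x)"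
    by (intro integral_mono integrable_density_exp_neg density_exp_neg_le)
  then show ?thesis using has_bochner_integral_integral_eq[OF density(1)] by simp
qed

text \<open>Jensen's inequality for the convex function \<open>exp\<close>, via its tangent at the mean.\<close>
lemma integral_density_exp_neg_ge:
  assumes m1: "has_bochner_integral M (\<lambda>x. \<phi> x * Z x) m1"
  shows "exp (- k * m1) \<le> (LINT x|M. \<phi> x * exp (- k * Z x))"
proof -
  define c where "c = exp (- k * m1)"
  have tangent: "has_bochner_integral M (\<lambda>x. c * (1 + k * m1) * \<phi> x - c * k * (\<phi> x * Z x)) c"
    using has_bochner_integral_diff[OF has_bochner_integral_mult_right[OF density(1)]
        has_bochner_integral_mult_right[OF m1], of "c * (1 + k * m1)" "c * k"]
    by (simp add: algebra_simps)
  have "c = (LINT x|M. c * (1 + k * m1) * \<phi> x - c * k * (\<phi> x * Z x))"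
    using tangent by (simp add: has_bochner_integral_integral_eq)
  also have "\<dots> \<le> (LINT x|M. \<phi> x * exp (- k * Z x))"
  proof (rule integral_mono[OF integrable.intros[OF tangent] integrable_density_exp_neg])
    fix x
    have "\<phi> x * (c * (1 + (- k * Z x) - (- k * m1))) \<le> \<phi> x * exp (- k * Z x)"
      unfolding c_def using density(2) by (intro mult_left_mono exp_tangent_le)
    then show "c * (1 + k * m1) * \<phi> x - c * k * (\<phi> x * Z x) \<le> \<phi> x * exp (- k * Z x)"
      by (simp add: algebra_simps)
  qed
  finally show ?thesis by (simp add: c_def)
qed

lemma integral_density_exp_neg_le:
  assumes m1: "has_bochner_integral M (\<lambda>x. \<phi> x * Z x) m1"
    and m2: "has_bochner_integral M (\<lambda>x. \<phi> x * Z x ^ 2) m2"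
  shows "(LINT x|M. \<phi> x * exp (- k * Z x)) \<le> 1 - k * m1 + k\<^sup>2 / 2 * m2"
proof -
  have quadratic: "has_bochner_integral M
      (\<lambda>x. \<phi> x - k * (\<phi> x * Z x) + k\<^sup>2 / 2 * (\<phi> x * Z x ^ 2)) (1 - k * m1 + k\<^sup>2 / 2 * m2)"
    by (intro has_bochner_integral_add has_bochner_integral_diff has_bochner_integral_mult_right
        density(1) m1 m2)
  have "(LINT x|M. \<phi> x * exp (- k * Z x))
      \<le> (LINT x|M. \<phi> x - k * (\<phi> x * Z x) + k\<^sup>2 / 2 * (\<phi> x * Z x ^ 2))"
  proof (rule integral_mono[OF integrable_density_exp_neg integrable.intros[OF quadratic]])
    fix x
    have "\<phi> x * exp (- (k * Z x)) \<le> \<phi> x * (1 - k * Z x + (k * Z x)\<^sup>2 / 2)"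
      using density(2) Z(2) k by (intro mult_left_mono exp_minus_le_quadratic) auto
    then show "\<phi> x * exp (- k * Z x) \<le> \<phi> x - k * (\<phi> x * Z x) + k\<^sup>2 / 2 * (\<phi> x * Z x ^ 2)"
      by (simp add: algebra_simps power2_eq_square)
  qed
  also have "\<dots> = 1 - k * m1 + k\<^sup>2 / 2 * m2"
    by (rule has_bochner_integral_integral_eq[OF quadratic])
  finally show ?thesis .
qed

end

lemma std_normal_density_mult_exp:
  "std_normal_density x * exp (t * x) = exp (t\<^sup>2 / 2) * normal_density t 1 x"
proof -
  have "- x\<^sup>2 / 2 + t * x = t\<^sup>2 / 2 + - (x - t)\<^sup>2 / 2"
    by (simp add: power2_eq_square field_simps)
  then show ?thesis
    unfolding std_normal_density_def normal_density_def by (simp add: exp_add[symmetric])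
qed

lemma has_bochner_integral_normal_density:
  "0 < \<sigma> \<Longrightarrow> has_bochner_integral lborel (normal_density \<mu> \<sigma>) 1"
  by (simp add: has_bochner_integral_iff)

lemma has_bochner_integral_std_normal_exp:
  "has_bochner_integral lborel (\<lambda>x. std_normal_density x * exp (t * x)) (exp (t\<^sup>2 / 2))"
  using has_bochner_integral_mult_right[OF has_bochner_integral_normal_density[of 1 t], of "exp (t\<^sup>2 / 2)"]
  by (rule has_bochner_integral_eqI[OF _ std_normal_density_mult_exp[symmetric]]) simp_all

lemma has_bochner_integral_std_normal_mult_exp:
  "has_bochner_integral lborel (\<lambda>x. std_normal_density x * (x * exp (t * x))) (t * exp (t\<^sup>2 / 2))"
proof -
  have eq: "exp (t\<^sup>2 / 2) * (normal_density t 1 x * x) = std_normal_density x * (x * exp (t * x))" for x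
    using std_normal_density_mult_exp[of x t] by (metis mult.assoc mult.commute)
  show ?thesis
    by (rule has_bochner_integral_eqI[OF has_bochner_integral_mult_right[OF normal_moment_nz_1] eq])
       simp_all
qed

lemma has_bochner_integral_std_normal_exp_excess:
  "has_bochner_integral lborel (\<lambda>x. std_normal_density x * (exp (s * x) - 1 - s * x))
     (exp (s\<^sup>2 / 2) - 1)"
proof -
  have "has_bochner_integral lborel
      (\<lambda>x. std_normal_density x * exp (s * x) - std_normal_density x - s * (std_normal_density x * x))
      (exp (s\<^sup>2 / 2) - 1 - s * 0)"
    using std_normal_moment_odd[of 0]
    by (intro has_bochner_integral_diff has_bochner_integral_mult_right
        has_bochner_integral_std_normal_exp has_bochner_integral_normal_density) simp_all
  then show ?thesis by (rule has_bochner_integral_eqI) (simp_all add: algebra_simps)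
qed

lemma has_bochner_integral_std_normal_exp_excess_sq:
  "has_bochner_integral lborel (\<lambda>x. std_normal_density x * (exp (s * x) - 1 - s * x)\<^sup>2)
     (exp (2 * s\<^sup>2) - 2 * (1 + s\<^sup>2) * exp (s\<^sup>2 / 2) + s\<^sup>2 + 1)"
proof -
  have "has_bochner_integral lborel
     (\<lambda>x. std_normal_density x * exp ((2 * s) * x) + std_normal_density x
        + s\<^sup>2 * (std_normal_density x * x\<^sup>2) - 2 * (std_normal_density x * exp (s * x))
        - (2 * s) * (std_normal_density x * (x * exp (s * x))) + (2 * s) * (std_normal_density x * x))
     (exp ((2 * s)\<^sup>2 / 2) + 1 + s\<^sup>2 * 1 - 2 * exp (s\<^sup>2 / 2) - (2 * s) * (s * exp (s\<^sup>2 / 2)) + (2 * s) * 0)"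
    using std_normal_moment_odd[of 0] std_normal_moment_even[of 1]
    by (intro has_bochner_integral_diff has_bochner_integral_add has_bochner_integral_mult_right
        has_bochner_integral_std_normal_exp has_bochner_integral_std_normal_mult_exp
        has_bochner_integral_normal_density) simp_all
  then show ?thesis
  proof (rule has_bochner_integral_eqI)
    fix x
    have "exp (2 * s * x) = exp (s * x) * exp (s * x)" by (simp add: exp_add[symmetric])
    then show "std_normal_density x * exp (2 * s * x) + std_normal_density x
        + s\<^sup>2 * (std_normal_density x * x\<^sup>2) - 2 * (std_normal_density x * exp (s * x))
        - 2 * s * (std_normal_density x * (x * exp (s * x))) + 2 * s * (std_normal_density x * x)
        = std_normal_density x * (exp (s * x) - 1 - s * x)\<^sup>2"
      by (simp add: power2_eq_square algebra_simps)
  qed (simp add: power2_eq_square algebra_simps)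
qed

lemma ln_gauss_expect_exp_excess_bounds:
  fixes k s :: real
  assumes k: "0 \<le> k"
  defines "L \<equiv> ln (gauss_expect (\<lambda>x. exp (- k * (exp (s * x) - 1 - s * x))))"
  shows "- k * (exp (s\<^sup>2 / 2) - 1) \<le> L" and "L \<le> 0"
    and "L \<le> - k * (exp (s\<^sup>2 / 2) - 1)
               + k\<^sup>2 / 2 * (exp (2 * s\<^sup>2) - 2 * (1 + s\<^sup>2) * exp (s\<^sup>2 / 2) + s\<^sup>2 + 1)"
proof -
  define Z where "Z x = exp (s * x) - 1 - s * x" for x
  define E where "E = (LINT x|lborel. std_normal_density x * exp (- k * Z x))"
  have L_def': "L = ln E"
    unfolding L_def E_def Z_def gauss_expect_def ..
  note density = has_bochner_integral_normal_density[OF zero_less_one, of 0] normal_density_nonneg[of 0 1]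
  have Z: "Z \<in> borel_measurable lborel" "0 \<le> Z x" for x
    unfolding Z_def using exp_ge_add_one_self[of "s * x"] by (measurable, linarith)
  note m1 = has_bochner_integral_std_normal_exp_excess[of s, folded Z_def]
  note m2 = has_bochner_integral_std_normal_exp_excess_sq[of s, folded Z_def]
  have lower: "exp (- k * (exp (s\<^sup>2 / 2) - 1)) \<le> E"
    unfolding E_def using density Z k m1 by (rule integral_density_exp_neg_ge)
  then have "0 < E" by (rule less_le_trans[OF exp_gt_zero])
  then show "- k * (exp (s\<^sup>2 / 2) - 1) \<le> L"
    using lower by (simp add: L_def' ln_ge_iff)
  have "E \<le> 1"
    unfolding E_def using density Z k by (rule integral_density_exp_neg_le_one)
  with \<open>0 < E\<close> show "L \<le> 0" by (simp add: L_def')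
  have "L \<le> E - 1"
    using \<open>0 < E\<close> by (simp add: L_def' ln_le_minus_one)
  also have "E \<le> 1 - k * (exp (s\<^sup>2 / 2) - 1)
      + k\<^sup>2 / 2 * (exp (2 * s\<^sup>2) - 2 * (1 + s\<^sup>2) * exp (s\<^sup>2 / 2) + s\<^sup>2 + 1)"
    unfolding E_def using density Z k m1 m2 by (rule integral_density_exp_neg_le)
  finally show "L \<le> - k * (exp (s\<^sup>2 / 2) - 1)
      + k\<^sup>2 / 2 * (exp (2 * s\<^sup>2) - 2 * (1 + s\<^sup>2) * exp (s\<^sup>2 / 2) + s\<^sup>2 + 1)"
    by simp
qed

lemma gauss_expect_exp_excess_sandwich:
  fixes c u \<eta> T :: real
  assumes "0 < c" "0 \<le> u" "0 < \<eta>" "0 < T"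
  shows "max (c * (u / (\<eta>^2 * T)) * (exp (\<eta>^2 / 2 * T) - 1) - c * (u^2 / (2 * \<eta>^4 * T^2)) *
               (exp (2 * \<eta>^2 * T) - 2 * (1 + \<eta>^2 * T) * exp (\<eta>^2 * T / 2) + \<eta>^2 * T + 1)) 0
           \<le> - c * ln (gauss_expect (\<lambda>x. exp (- (u / (\<eta>^2 * T)) *
                   (exp (\<eta> * sqrt T * x) - 1 - \<eta> * sqrt T * x))))
         \<and> - c * ln (gauss_expect (\<lambda>x. exp (- (u / (\<eta>^2 * T)) *
                   (exp (\<eta> * sqrt T * x) - 1 - \<eta> * sqrt T * x))))
           \<le> c * (u / (\<eta>^2 * T)) * (exp (\<eta>^2 / 2 * T) - 1)"
proof -
  define k where "k = u / (\<eta>^2 * T)"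
  define L where "L = ln (gauss_expect (\<lambda>x. exp (- k * (exp (\<eta> * sqrt T * x) - 1 - \<eta> * sqrt T * x))))"
  define m where "m = exp (\<eta>^2 * T / 2) - 1"
  define e2 where "e2 = exp (2 * \<eta>^2 * T) - 2 * (1 + \<eta>^2 * T) * exp (\<eta>^2 * T / 2) + \<eta>^2 * T + 1"
  have "0 \<le> k" using assms by (simp add: k_def)
  have "(\<eta> * sqrt T)\<^sup>2 = \<eta>^2 * T" using assms by (simp add: power_mult_distrib)
  from ln_gauss_expect_exp_excess_bounds[OF \<open>0 \<le> k\<close>, of "\<eta> * sqrt T", unfolded this]
  have L: "- k * m \<le> L" "L \<le> 0" "L \<le> - k * m + k\<^sup>2 / 2 * e2"
    by (simp_all add: L_def m_def e2_def mult.assoc)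
  have "c * (- k * m) \<le> c * L" "c * L \<le> c * (- k * m + k\<^sup>2 / 2 * e2)"
    using L(1,3) \<open>0 < c\<close> by (intro mult_left_mono; simp)+
  moreover have "c * L \<le> 0"
    using L(2) \<open>0 < c\<close> by (intro mult_nonneg_nonpos) auto
  moreover have b: "c * k * (exp (\<eta>^2 / 2 * T) - 1) = c * (k * m)"
    by (simp add: m_def)
  moreover have correction: "c * (u^2 / (2 * \<eta>^4 * T^2)) * e2 = c * (k\<^sup>2 / 2 * e2)"
    by (simp add: k_def power_divide power_mult_distrib)
  ultimately show ?thesis
    unfolding k_def[symmetric] L_def[symmetric] e2_def[symmetric] b correction
    by (simp add: algebra_simps)
qed

lemma bounded_image_greaterThanLessThan:
  fixes f :: "real \<Rightarrow> 'a::metric_space"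
  assumes cont: "continuous_on {a<..<b} f"
    and lim_a: "(f \<longlongrightarrow> l) (at_right a)" and lim_b: "(f \<longlongrightarrow> m) (at_left b)"
  shows "bounded (f ` {a<..<b})"
proof -
  obtain a' where "a < a'" and near_a: "\<And>x. a < x \<Longrightarrow> x < a' \<Longrightarrow> dist (f x) l < 1"
    using tendstoD[OF lim_a zero_less_one] eventually_at_right[of a "a + 1"] by auto
  obtain b' where "b' < b" and near_b: "\<And>x. b' < x \<Longrightarrow> x < b \<Longrightarrow> dist (f x) m < 1"
    using tendstoD[OF lim_b zero_less_one] eventually_at_left[of "b - 1" b] by auto
  have "{a'..b'} \<subseteq> {a<..<b}" using \<open>a < a'\<close> \<open>b' < b\<close> by auto
  then have "bounded (f ` {a'..b'})"
    by (intro compact_imp_bounded compact_continuous_image continuous_on_subset[OF cont]) auto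
  moreover have "f ` {a<..<b} \<subseteq> ball l 1 \<union> f ` {a'..b'} \<union> ball m 1"
  proof
    fix y assume "y \<in> f ` {a<..<b}"
    then obtain x where "a < x" "x < b" "y = f x" by auto
    then show "y \<in> ball l 1 \<union> f ` {a'..b'} \<union> ball m 1"
      using near_a[of x] near_b[of x] by (cases "x < a'"; cases "b' < x") (auto simp: dist_commute)
  qed
  ultimately show ?thesis
    by (meson bounded_Un bounded_ball bounded_subset)
qed

lemma bounded_image_nonneg_le:
  fixes f g :: "'a \<Rightarrow> real"
  assumes "bounded (g ` S)" and "\<And>x. x \<in> S \<Longrightarrow> 0 \<le> f x \<and> f x \<le> g x"
  shows "bounded (f ` S)"
proof -
  obtain B where "\<And>x. x \<in> S \<Longrightarrow> \<bar>g x\<bar> \<le> B"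
    using assms(1) unfolding bounded_real by blast
  with assms(2) have "\<And>x. x \<in> S \<Longrightarrow> \<bar>f x\<bar> \<le> B" by fastforce
  then show ?thesis unfolding bounded_real by blast
qed

locale lambertW_profile =
  fixes A :: "real \<Rightarrow> real" and c :: real and \<theta> w :: "real \<Rightarrow> real"
  assumes A_pos: "\<And>\<rho>. 0 < A \<rho>" and A_C1: "A C1_differentiable_on UNIV" and c_pos: "0 < c"
    and theta_eq: "\<theta> = (\<lambda>\<rho>. c * (1 - \<rho>\<^sup>2))"
    and w_eq: "w = (\<lambda>\<rho>. lambertW (A \<rho> * \<theta> \<rho>))"
begin

definition rate :: "real \<Rightarrow> real" where
  "rate \<rho> = w \<rho> / \<theta> \<rho>"

lemma theta_pos: "\<rho> \<in> {-1<..<1} \<Longrightarrow> 0 < \<theta> \<rho>"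
  using c_pos by (simp add: theta_eq abs_square_less_1 abs_less_iff)

lemma w_pos: "\<rho> \<in> {-1<..<1} \<Longrightarrow> 0 < w \<rho>"
  using A_pos theta_pos by (simp add: w_eq lambertW_pos)

lemma rate_pos: "\<rho> \<in> {-1<..<1} \<Longrightarrow> 0 < rate \<rho>"
  using w_pos theta_pos by (simp add: rate_def)

lemma rate_eq: "\<rho> \<in> {-1<..<1} \<Longrightarrow> rate \<rho> = A \<rho> * exp (- w \<rho>)"
  unfolding rate_def using lambertW_div_self[of "A \<rho> * \<theta> \<rho>"] A_pos[of \<rho>] theta_pos[of \<rho>]
  by (simp add: w_eq field_simps)

lemma continuous_A: "continuous_on UNIV A"
  using A_C1
  by (simp add: C1_differentiable_on_eq continuous_at_imp_continuous_on differentiable_imp_continuous_within)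

lemma C1_theta: "\<theta> C1_differentiable_on UNIV"
  unfolding theta_eq by (intro derivative_intros) (simp add: power2_eq_square)

lemma C1_w: "w C1_differentiable_on {-1<..<1}"
proof -
  have "(\<lambda>\<rho>. A \<rho> * \<theta> \<rho>) C1_differentiable_on {-1<..<1}"
    using A_C1 C1_theta by (intro C1_differentiable_on_mult) (auto intro: C1_differentiable_on_subset)
  then show ?thesis
    unfolding w_eq using A_pos theta_pos
    by (intro C1_differentiable_on_compose_real[OF _ C1_differentiable_on_lambertW]) auto
qed

lemma C1_rate: "rate C1_differentiable_on {-1<..<1}"
  unfolding rate_def[abs_def]
  using C1_w C1_differentiable_on_subset[OF C1_theta] theta_pos
  by (intro C1_differentiable_on_divide_real) force+

lemma tendsto_w_rate_at_endpoint:
  assumes inside: "eventually (\<lambda>\<rho>. \<rho> \<in> {-1<..<1}) F"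
    and lim: "((\<lambda>\<rho>. \<rho>) \<longlongrightarrow> p) F" and "p\<^sup>2 = 1"
  shows "(w \<longlongrightarrow> 0) F" and "(rate \<longlongrightarrow> A p) F"
proof -
  have "((\<lambda>\<rho>. A \<rho> * \<theta> \<rho>) \<longlongrightarrow> A p * \<theta> p) F"
    using continuous_A lim unfolding theta_eq
    by (intro tendsto_intros) (auto simp: continuous_on_def intro: tendsto_compose)
  moreover have "\<theta> p = 0" using \<open>p\<^sup>2 = 1\<close> by (simp add: theta_eq)
  ultimately show "(w \<longlongrightarrow> 0) F"
    unfolding w_eq using inside A_pos theta_pos
    by (intro tendsto_lambertW_zero) (auto elim!: eventually_mono intro: less_imp_le)
  have "((\<lambda>\<rho>. A \<rho> * exp (- w \<rho>)) \<longlongrightarrow> A p * exp (- 0)) F"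
    using continuous_A lim \<open>(w \<longlongrightarrow> 0) F\<close>
    by (intro tendsto_intros) (auto simp: continuous_on_def intro: tendsto_compose)
  then show "(rate \<longlongrightarrow> A p) F"
    using inside by (simp add: rate_eq eventually_mono Lim_transform_eventually tendsto_cong)
qed

lemma rate_mult_affine:
  assumes "0 < \<alpha>" "0 \<le> \<beta>" and f_eq: "f = (\<lambda>\<rho>. rate \<rho> * (\<alpha> + \<beta> * w \<rho>))"
  shows "f C1_differentiable_on {-1<..<1}" and "\<And>\<rho>. \<rho> \<in> {-1<..<1} \<Longrightarrow> 0 < f \<rho>"
    and "(f \<longlongrightarrow> \<alpha> * A 1) (at_left 1)" and "(f \<longlongrightarrow> \<alpha> * A (-1)) (at_right (-1))"
    and "bounded (f ` {-1<..<1})"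
proof -
  show C1: "f C1_differentiable_on {-1<..<1}"
    unfolding f_eq using C1_rate C1_w by (intro derivative_intros)
  show "0 < f \<rho>" if "\<rho> \<in> {-1<..<1}" for \<rho>
    using rate_pos[OF that] w_pos[OF that] assms(1,2) by (simp add: f_eq add_pos_nonneg)
  have lim: "(f \<longlongrightarrow> \<alpha> * A p) F"
    if "eventually (\<lambda>\<rho>. \<rho> \<in> {-1<..<1}) F" "((\<lambda>\<rho>. \<rho>) \<longlongrightarrow> p) F" "p\<^sup>2 = 1" for F p
    using tendsto_w_rate_at_endpoint[OF that] unfolding f_eq by (auto intro!: tendsto_eq_intros)
  show "(f \<longlongrightarrow> \<alpha> * A 1) (at_left 1)" and "(f \<longlongrightarrow> \<alpha> * A (-1)) (at_right (-1))"
    by (intro lim eventually_at_left_real eventually_at_right_real tendsto_ident_at; simp)+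
  moreover have "continuous_on {-1<..<1} f"
    using C1 by (intro differentiable_imp_continuous_on C1_diff_imp_diff)
  ultimately show "bounded (f ` {-1<..<1})"
    by (intro bounded_image_greaterThanLessThan)
qed

end

theorem lemma2:
  fixes T r \<nu> \<mu> \<eta> \<sigma> s0 lam \<gamma> :: real
    and \<theta> w d a b g :: "real \<Rightarrow> real"
  assumes "T > 0" "\<eta> > 0" "\<sigma> > 0" "s0 > 0" "lam > 0" "\<gamma> > 0"
  defines "\<theta> \<equiv> \<lambda>\<rho>. lam * \<gamma> * (1 - \<rho>^2)"
  defines "w \<equiv> \<lambda>\<rho>. lambertW (s0 * \<eta>^2 * T *
              exp ((\<nu> - \<eta> * \<rho> * ((\<mu> - r) / \<sigma>) - \<eta>^2 / 2) * T) * \<theta> \<rho>)"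
  defines "d \<equiv> \<lambda>\<rho>. lam * exp (- r * T) / (\<theta> \<rho> * \<eta>^2 * T) * w \<rho> * (1 + w \<rho> / 2)"
  defines "a \<equiv> \<lambda>\<rho>. - (lam * exp (- r * T) / \<theta> \<rho>) *
              ln (gauss_expect (\<lambda>x. exp (- (w \<rho> / (\<eta>^2 * T)) *
                   (exp (\<eta> * sqrt T * x) - 1 - \<eta> * sqrt T * x))))"
  defines "b \<equiv> \<lambda>\<rho>. lam * exp (- r * T) / \<theta> \<rho> * (w \<rho> / (\<eta>^2 * T)) * (exp (\<eta>^2 / 2 * T) - 1)"
  defines "g \<equiv> \<lambda>\<rho>. d \<rho> + b \<rho>"
  shows "d C1_differentiable_on {-1<..<1} \<and> g C1_differentiable_on {-1<..<1}
    \<and> (\<forall>\<rho>\<in>{-1<..<1}. d \<rho> > 0 \<and> g \<rho> > 0)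
    \<and> (d \<longlongrightarrow> lam * exp (- r * T) * s0 * exp ((\<nu> - \<eta> * ((\<mu> - r) / \<sigma>) - \<eta>^2 / 2) * T)) (at_left 1)
    \<and> (d \<longlongrightarrow> lam * exp (- r * T) * s0 * exp ((\<nu> + \<eta> * ((\<mu> - r) / \<sigma>) - \<eta>^2 / 2) * T)) (at_right (-1))
    \<and> (g \<longlongrightarrow> lam * exp (- r * T) * s0 * exp ((\<nu> - \<eta> * ((\<mu> - r) / \<sigma>)) * T)) (at_left 1)
    \<and> (g \<longlongrightarrow> lam * exp (- r * T) * s0 * exp ((\<nu> + \<eta> * ((\<mu> - r) / \<sigma>)) * T)) (at_right (-1))
    \<and> (\<forall>\<rho>\<in>{-1<..<1}.
         max (b \<rho> - lam * exp (- r * T) / \<theta> \<rho> * (w \<rho>^2 / (2 * \<eta>^4 * T^2)) *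
               (exp (2 * \<eta>^2 * T) - 2 * (1 + \<eta>^2 * T) * exp (\<eta>^2 * T / 2) + \<eta>^2 * T + 1)) 0
           \<le> a \<rho> \<and> a \<rho> \<le> b \<rho>)
    \<and> bounded (a ` {-1<..<1}) \<and> bounded (b ` {-1<..<1})
    \<and> bounded (d ` {-1<..<1}) \<and> bounded (g ` {-1<..<1})"
proof -
  define A where "A \<rho> = s0 * \<eta>^2 * T * exp ((\<nu> - \<eta> * \<rho> * ((\<mu> - r) / \<sigma>) - \<eta>^2 / 2) * T)" for \<rho>
  interpret lambertW_profile A "lam * \<gamma>" \<theta> w
  proof
    show "A C1_differentiable_on UNIV"
      unfolding A_def using assms(1-6)
      by (intro C1_differentiable_on_of_real_deriv) (auto intro!: derivative_eq_intros continuous_intros)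
  qed (use assms(1-6) in \<open>simp_all add: A_def \<theta>_def w_def\<close>)
  define K where "K = lam * exp (- r * T) / (\<eta>^2 * T)"
  define ee where "ee = exp (\<eta>^2 / 2 * T)"
  have "0 < K" "0 < K * ee" "0 \<le> K / 2" using assms(1-6) by (simp_all add: K_def ee_def)
  have d_eq: "d = (\<lambda>\<rho>. rate \<rho> * (K + K / 2 * w \<rho>))"
    unfolding d_def K_def rate_def by (simp add: fun_eq_iff divide_simps algebra_simps)
  have "b = (\<lambda>\<rho>. rate \<rho> * (K * (ee - 1)))"
    unfolding b_def K_def ee_def rate_def by (simp add: fun_eq_iff divide_simps mult_ac)
  then have g_eq: "g = (\<lambda>\<rho>. rate \<rho> * (K * ee + K / 2 * w \<rho>))"
    unfolding g_def d_eq by (simp add: fun_eq_iff algebra_simps)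
  note d = rate_mult_affine[OF \<open>0 < K\<close> \<open>0 \<le> K / 2\<close> d_eq]
  note g = rate_mult_affine[OF \<open>0 < K * ee\<close> \<open>0 \<le> K / 2\<close> g_eq]
  have A_endpoints: "K * ee * A p = lam * exp (- r * T) * s0 * exp ((\<nu> - \<eta> * p * ((\<mu> - r) / \<sigma>)) * T)"
    "K * A p = lam * exp (- r * T) * s0 * exp ((\<nu> - \<eta> * p * ((\<mu> - r) / \<sigma>) - \<eta>^2 / 2) * T)" for p
    using assms(1-6) by (simp_all add: A_def K_def ee_def mult_exp_exp algebra_simps)
  have sandwich: "max (b \<rho> - lam * exp (- r * T) / \<theta> \<rho> * (w \<rho>^2 / (2 * \<eta>^4 * T^2)) *
               (exp (2 * \<eta>^2 * T) - 2 * (1 + \<eta>^2 * T) * exp (\<eta>^2 * T / 2) + \<eta>^2 * T + 1)) 0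
           \<le> a \<rho> \<and> a \<rho> \<le> b \<rho>" if "\<rho> \<in> {-1<..<1}" for \<rho>
    unfolding a_def b_def using assms(1-6) theta_pos[OF that] w_pos[OF that]
    by (intro gauss_expect_exp_excess_sandwich) simp_all
  have "0 \<le> b \<rho> \<and> b \<rho> \<le> g \<rho>" if "\<rho> \<in> {-1<..<1}" for \<rho>
    using sandwich[OF that] d(2)[OF that] by (simp add: g_def)
  then have "bounded (b ` {-1<..<1})" by (rule bounded_image_nonneg_le[OF g(5)])
  then have "bounded (a ` {-1<..<1})"
    by (rule bounded_image_nonneg_le) (use sandwich in force)
  moreover note d(3,4) g(3,4)
  ultimately show ?thesis
    using d(1,2,5) g(1,2,5) sandwich \<open>bounded (b ` {-1<..<1})\<close>
    unfolding A_endpoints by simp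
qed

end
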